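(* Suppose $w,w'\in[d]^n$ differ in exactly one coordinate, and let $\lambda=\mathrm{shRSK}(w)$, $\lambda'=\mathrm{shRSK}(w')$. Then for every $k\in[d]$: $|(\lambda_1+\cdots+\lambda_k)-(\lambda'_1+\cdots+\lambda'_k)|\le1$ and $|\lambda_k-\lambda'_k|\le2$.
   Context: $\mathrm{shRSK}(w)$ is the RSK shape of $w$: the Young diagram $\lambda_1\ge\cdots\ge\lambda_d\ge0$ whose first $k$ rows sum to the maximum total length of a union of $k$ disjoint weakly increasing subsequences of $w$. *)

theory Defs
  imports Main
begin

definition weakly_inc_positions :: "nat list \<Rightarrow> nat set \<Rightarrow> bool" where
  "weakly_inc_positions w S \<longleftrightarrow> S \<subseteq> {..<length w} \<and>
     (\<forall>i\<in>S. \<forall>j\<in>S. i < j \<longrightarrow> w ! i \<le> w ! j)"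

definition greene :: "nat list \<Rightarrow> nat \<Rightarrow> nat" where
  "greene w k = Max {card (\<Union>i<k. S i) | S.
      (\<forall>i<k. weakly_inc_positions w (S i)) \<and>
      (\<forall>i<k. \<forall>j<k. i \<noteq> j \<longrightarrow> S i \<inter> S j = {})}"

text \<open>shRSK w: row lengths lambda_1, lambda_2, ... (1-indexed), determined by
  lambda_1 + ... + lambda_k = greene w k.\<close>
definition shRSK :: "nat list \<Rightarrow> nat \<Rightarrow> nat" where
  "shRSK w k = greene w k - greene w (k - 1)"

end

theory Submission
  imports Defs
begin

text \<open>Greene's numbers greene w k change by at most one when a single letter of w is changed:
  deleting the changed position from an optimal family of k disjoint weakly increasing
  subsequences of w leaves such a family for w' that is at most one element smaller.
  The partial sums of shRSK are exactly Greene's numbers, so they move by at most one, and each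
  row length, being a difference of two consecutive partial sums, moves by at most two.\<close>

definition disjoint_inc_family :: "nat list \<Rightarrow> nat \<Rightarrow> (nat \<Rightarrow> nat set) \<Rightarrow> bool" where
  "disjoint_inc_family w k S \<longleftrightarrow> (\<forall>i<k. weakly_inc_positions w (S i)) \<and>
      (\<forall>i<k. \<forall>j<k. i \<noteq> j \<longrightarrow> S i \<inter> S j = {})"

lemma greene_eq_Max: "greene w k = Max {card (\<Union>i<k. S i) | S. disjoint_inc_family w k S}"
  unfolding greene_def disjoint_inc_family_def by simp

lemma disjoint_inc_family_subset_positions:
  "disjoint_inc_family w k S \<Longrightarrow> (\<Union>i<k. S i) \<subseteq> {..<length w}"
  unfolding disjoint_inc_family_def weakly_inc_positions_def by blast

lemma disjoint_inc_family_empty: "disjoint_inc_family w k (\<lambda>_. {})"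
  unfolding disjoint_inc_family_def weakly_inc_positions_def by simp

lemma finite_greene_candidates:
  "finite {card (\<Union>i<k. S i) | S. disjoint_inc_family w k S}"
proof (rule finite_subset)
  show "{card (\<Union>i<k. S i) | S. disjoint_inc_family w k S} \<subseteq> {..length w}"
    using card_mono[OF _ disjoint_inc_family_subset_positions] by fastforce
qed simp

lemma card_le_greene: "disjoint_inc_family w k S \<Longrightarrow> card (\<Union>i<k. S i) \<le> greene w k"
  unfolding greene_eq_Max by (rule Max_ge[OF finite_greene_candidates]) blast

lemma greene_attained:
  obtains S where "disjoint_inc_family w k S" and "card (\<Union>i<k. S i) = greene w k"
proof -
  have "greene w k \<in> {card (\<Union>i<k. S i) | S. disjoint_inc_family w k S}"
    unfolding greene_eq_Max
    using finite_greene_candidates disjoint_inc_family_empty by (intro Max_in) blast+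
  thus thesis using that by auto
qed

lemma greene_0 [simp]: "greene w 0 = 0"
  by (rule greene_attained[of w 0]) simp

lemma greene_le_Suc: "greene w k \<le> greene w (Suc k)"
proof -
  obtain S where S: "disjoint_inc_family w k S" and opt: "card (\<Union>i<k. S i) = greene w k"
    using greene_attained by blast
  have "disjoint_inc_family w (Suc k) (S(k := {}))"
    using S unfolding disjoint_inc_family_def weakly_inc_positions_def
    by (auto simp: less_Suc_eq)
  moreover have "(\<Union>i<Suc k. (S(k := {})) i) = (\<Union>i<k. S i)"
    by (auto simp: less_Suc_eq)
  ultimately show ?thesis
    using card_le_greene opt by metis
qed

lemma greene_mono: "k \<le> l \<Longrightarrow> greene w k \<le> greene w l"
  using lift_Suc_mono_le[of "greene w"] greene_le_Suc by blast

lemma sum_shRSK_eq_greene: "(\<Sum>j=1..k. shRSK w j) = greene w k"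
  by (induction k) (simp_all add: shRSK_def greene_le_Suc)

lemma disjoint_inc_family_transfer:
  assumes "length w = length w'"
    and S: "disjoint_inc_family w k S"
  shows "disjoint_inc_family w' k (\<lambda>i. S i - {p. p < length w \<and> w ! p \<noteq> w' ! p})"
proof -
  let ?D = "{p. p < length w \<and> w ! p \<noteq> w' ! p}"
  have "weakly_inc_positions w' (S i - ?D)" if "i < k" for i
  proof -
    have sub: "S i \<subseteq> {..<length w}" and inc: "\<forall>a\<in>S i. \<forall>b\<in>S i. a < b \<longrightarrow> w ! a \<le> w ! b"
      using S that unfolding disjoint_inc_family_def weakly_inc_positions_def by blast+
    show ?thesis
      unfolding weakly_inc_positions_def
    proof (intro conjI ballI impI)
      show "S i - ?D \<subseteq> {..<length w'}"
        using sub assms(1) by auto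
      fix a b
      assume a: "a \<in> S i - ?D" and b: "b \<in> S i - ?D" and "a < b"
      then have "w' ! a = w ! a" "w' ! b = w ! b"
        using sub by auto
      then show "w' ! a \<le> w' ! b"
        using inc a b \<open>a < b\<close> by simp
    qed
  qed
  then show ?thesis
    using S unfolding disjoint_inc_family_def by blast
qed

lemma greene_le_add_hamming:
  assumes "length w = length w'"
  shows "greene w k \<le> greene w' k + card {p. p < length w \<and> w ! p \<noteq> w' ! p}"
proof -
  define D where "D = {p. p < length w \<and> w ! p \<noteq> w' ! p}"
  obtain S where S: "disjoint_inc_family w k S" and opt: "card (\<Union>i<k. S i) = greene w k"
    using greene_attained by blast
  have fin: "finite (\<Union>i<k. S i)" "finite D"
    using finite_subset[OF disjoint_inc_family_subset_positions[OF S]] by (auto simp: D_def)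
  have "greene w k \<le> card (((\<Union>i<k. S i) - D) \<union> D)"
    unfolding opt[symmetric] using fin by (intro card_mono) auto
  also have "\<dots> \<le> card ((\<Union>i<k. S i) - D) + card D"
    by (rule card_Un_le)
  also have "(\<Union>i<k. S i) - D = (\<Union>i<k. S i - D)"
    by blast
  also have "card \<dots> \<le> greene w' k"
    unfolding D_def by (rule card_le_greene[OF disjoint_inc_family_transfer[OF assms S]])
  finally show ?thesis
    by (simp add: D_def)
qed

theorem mainTheorem11:
  fixes d n :: nat and w w' :: "nat list"
  assumes "length w = n" and "length w' = n"
    and "set w \<subseteq> {1..d}" and "set w' \<subseteq> {1..d}"
    and "card {i. i < n \<and> w ! i \<noteq> w' ! i} = 1"
  shows "\<forall>k\<in>{1..d}.
     \<bar>int (\<Sum>j=1..k. shRSK w j) - int (\<Sum>j=1..k. shRSK w' j)\<bar> \<le> 1 \<and>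
     \<bar>int (shRSK w k) - int (shRSK w' k)\<bar> \<le> 2"
proof -
  have "{i. i < n \<and> w' ! i \<noteq> w ! i} = {i. i < n \<and> w ! i \<noteq> w' ! i}"
    by auto
  then have close: "greene w k \<le> greene w' k + 1" "greene w' k \<le> greene w k + 1" for k
    using greene_le_add_hamming[of w w' k] greene_le_add_hamming[of w' w k] assms
    by simp_all
  have mono: "greene w (k - 1) \<le> greene w k" "greene w' (k - 1) \<le> greene w' k" for k
    by (simp_all add: greene_mono)
  show ?thesis
  proof (intro ballI conjI)
    fix k
    show "\<bar>int (\<Sum>j=1..k. shRSK w j) - int (\<Sum>j=1..k. shRSK w' j)\<bar> \<le> 1"
      unfolding sum_shRSK_eq_greene using close[of k] by linarith
    show "\<bar>int (shRSK w k) - int (shRSK w' k)\<bar> \<le> 2"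
      unfolding shRSK_def using close[of k] close[of "k - 1"] mono[of k] by linarith
  qed
qed

end
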